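(* Let $F\in\mathbb Z[T]$ with $F(0)\in\{-1,1\}$ and let $d\in\mathbb Z_{>0}$. Then there exists $M\in\mathcal D$ such that $F\equiv M\pmod{T^d}$ in $\mathbb Z[T]$.
   Context: $\Phi_n(T)\in\mathbb Z[T]$ denotes the $n$-th cyclotomic polynomial. A positive integer $n$ is of the special form if $n=pm$ where $p$ is prime and $m$ is a positive integer dividing $p-1$. $\mathcal D$ (the special root-of-unity polynomials) is the set of polynomials of the form $\pm\prod_{i}\Phi_{n_i}(T)$, a product of distinct cyclotomic polynomials in which every $n_i$ is of the special form. *)

theory Defs
  imports "HOL-Computational_Algebra.Computational_Algebra" "HOL-Analysis.Analysis"
begin

definition cyclotomic_complex :: "nat \<Rightarrow> complex poly" where
  "cyclotomic_complex n =
     (\<Prod>k\<in>{k\<in>{1..n}. coprime k n}. [:- cis (2 * pi * real k / real n), 1:])"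

definition cyclotomic :: "nat \<Rightarrow> int poly" where
  "cyclotomic n = (THE p. map_poly of_int p = cyclotomic_complex n)"

definition special_form :: "nat \<Rightarrow> bool" where
  "special_form n \<longleftrightarrow> (\<exists>p m. prime p \<and> m > 0 \<and> m dvd (p - 1) \<and> n = p * m)"

text \<open>The set D: +- a product of distinct cyclotomic polynomials with special-form indices.\<close>
definition special_root_of_unity_polys :: "int poly set" where
  "special_root_of_unity_polys =
     {s * (\<Prod>n\<in>S. cyclotomic n) | s S. s \<in> {1, -1} \<and> finite S \<and> (\<forall>n\<in>S. special_form n)}"

end

theory Submission
  imports Defs "HOL-Number_Theory.Cong"
begin

text \<open>
  Modulo \<open>T\<^sup>d\<close>, the integer polynomials with constant term \<open>\<plusminus>1\<close> are
  \<open>\<plusminus>\<Prod>\<^sub>j (1 - T\<^sup>j)\<^bsup>a\<^sub>j\<^esup>\<close> with \<open>a\<^sub>j \<in> \<int>\<close>, and \<open>T\<^sup>j - 1\<close> is the product of the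
  \<open>\<Phi>\<^sub>k\<close> with \<open>k dvd j\<close>. So it suffices that every \<open>\<Phi>\<^sub>m\<close> and every inverse
  \<open>\<Phi>\<^sub>m\<^sup>-\<^sup>1\<close> is congruent to \<open>\<plusminus>\<Phi>\<^sub>n\<close> for special indices \<open>n\<close> as large as we like
  (so that they can be chosen distinct). For a prime \<open>p \<ge> d\<close> with \<open>p \<equiv> 1 (mod m)\<close>,
  \<open>\<Phi>\<^sub>p\<^sub>m \<Phi>\<^sub>m = \<Phi>\<^sub>m(T\<^sup>p) \<equiv> \<Phi>\<^sub>m(0) = \<plusminus>1\<close>, so \<open>\<Phi>\<^sub>p\<^sub>m\<close> inverts \<open>\<Phi>\<^sub>m\<close>; doing this
  twice, via \<open>\<Phi>\<^sub>q\<^sub>m\<close> for any large prime \<open>q\<close>, represents \<open>\<Phi>\<^sub>m\<close> itself. Such primes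
  \<open>p\<close> exist in abundance: large prime divisors of \<open>\<Phi>\<^sub>m(x)\<close> are \<open>\<equiv> 1 (mod m)\<close>.
\<close>

lemma degree_monom_minus_1:
  assumes "n \<ge> 1"
  shows "degree (monom (1 :: 'a :: comm_ring_1) n - 1) = n"
proof -
  have "degree (-1 :: 'a poly) < degree (monom (1 :: 'a) n)"
    using assms by (simp add: degree_monom_eq)
  then show ?thesis using degree_add_eq_right[of "-1" "monom (1 :: 'a) n"]
    by (simp add: degree_monom_eq)
qed

lemma lead_coeff_monom_minus_1:
  "n \<ge> 1 \<Longrightarrow> lead_coeff (monom (1 :: 'a :: comm_ring_1) n - 1) = 1"
  by (simp add: degree_monom_minus_1)

lemma poly_dvd_poly: "p dvd q \<Longrightarrow> poly p x dvd poly q x"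
  by (auto elim!: dvdE)

lemma dvd_poly_sub_poly_0: "(x :: 'a :: comm_ring_1) dvd poly f x - poly f 0"
  by (cases f) simp

lemma monom_1_dvd_sub_poly_0: "monom 1 (Suc 0) dvd p - [:poly p 0:]"
proof (cases p)
  case (pCons a q)
  then have "p - [:poly p 0:] = monom 1 (Suc 0) * q" by (simp add: monom_Suc monom_0 one_pCons)
  then show ?thesis by simp
qed

lemma pcompose_monom_1: "pcompose (monom 1 m) q = (q :: 'a :: comm_semiring_1 poly) ^ m"
  by (induction m) (simp_all add: monom_0 monom_Suc pcompose_pCons one_pCons)

lemma monom_dvd_pcompose_monom_sub:
  assumes "d \<le> p"
  shows "monom 1 d dvd pcompose f (monom (1 :: 'a :: comm_ring_1) p) - [:poly f 0:]"
proof (cases f)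
  case (pCons a g)
  have "monom (1 :: 'a) p = monom 1 (p - d) * monom 1 d" using assms by (simp add: mult_monom)
  then have "pcompose f (monom 1 p) - [:poly f 0:] = monom 1 (p - d) * pcompose g (monom 1 p) * monom 1 d"
    using pCons by (simp add: pcompose_pCons ac_simps)
  then show ?thesis by simp
qed

lemma map_poly_of_int_add:
  "map_poly (of_int :: int \<Rightarrow> 'a :: comm_ring_1) (p + q) = map_poly of_int p + map_poly of_int q"
  by (rule poly_eqI) (simp add: coeff_map_poly)

lemma map_poly_of_int_diff:
  "map_poly (of_int :: int \<Rightarrow> 'a :: comm_ring_1) (p - q) = map_poly of_int p - map_poly of_int q"
  by (rule poly_eqI) (simp add: coeff_map_poly)

lemma map_poly_of_int_mult:
  "map_poly (of_int :: int \<Rightarrow> 'a :: comm_ring_1) (p * q) = map_poly of_int p * map_poly of_int q"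
  by (rule poly_eqI) (simp add: coeff_map_poly coeff_mult)

lemma map_poly_of_int_prod:
  "map_poly (of_int :: int \<Rightarrow> 'a :: comm_ring_1) (\<Prod>i\<in>A. f i) = (\<Prod>i\<in>A. map_poly of_int (f i))"
  by (induction A rule: infinite_finite_induct) (simp_all add: map_poly_of_int_mult)

lemma map_poly_of_int_inject:
  "map_poly (of_int :: int \<Rightarrow> 'a :: {comm_ring_1, ring_char_0}) p = map_poly of_int q \<longleftrightarrow> p = q"
  by (metis coeff_map_poly of_int_0 of_int_eq_iff poly_eqI)

lemma degree_map_poly_of_int:
  "degree (map_poly (of_int :: int \<Rightarrow> 'a :: {comm_ring_1, ring_char_0}) p) = degree p"
  by (simp add: degree_map_poly)

lemma lead_coeff_map_poly_of_int:
  "lead_coeff (map_poly (of_int :: int \<Rightarrow> 'a :: {comm_ring_1, ring_char_0}) p) = of_int (lead_coeff p)"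
  by (simp add: degree_map_poly_of_int coeff_map_poly)

lemma poly_map_poly_of_int: "poly (map_poly of_int p) (of_int x) = of_int (poly p x)"
  by (induction p) (auto simp: map_poly_pCons)

lemma monic_quotient_integral:
  fixes a b :: "int poly" and c :: "'a :: {idom, ring_char_0} poly"
  assumes b: "lead_coeff b = 1" and eq: "map_poly of_int a = map_poly of_int b * c"
  shows "\<exists>q. c = map_poly of_int q"
proof -
  obtain q r where qr: "pseudo_divmod a b = (q, r)" by (cases "pseudo_divmod a b")
  have "b \<noteq> 0" using b by auto
  then have "a = b * q + r" and r: "r = 0 \<or> degree r < degree b"
    using pseudo_divmod[OF _ qr] b by simp_all
  then have rem: "map_poly of_int b * (c - map_poly of_int q) = (map_poly of_int r :: 'a poly)"
    using eq by (simp add: map_poly_of_int_add map_poly_of_int_mult algebra_simps)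
  show ?thesis
  proof (rule ccontr)
    assume "\<nexists>q. c = map_poly of_int q"
    then have "c - map_poly of_int q \<noteq> 0" by auto
    moreover have "map_poly of_int b \<noteq> (0 :: 'a poly)"
      using \<open>b \<noteq> 0\<close> map_poly_of_int_inject[of b 0] by simp
    ultimately have "degree (map_poly of_int b * (c - map_poly of_int q)) \<ge> degree b"
        and "map_poly of_int b * (c - map_poly of_int q) \<noteq> 0"
      by (simp_all add: degree_mult_eq degree_map_poly_of_int)
    then show False using r unfolding rem by (auto simp: degree_map_poly_of_int)
  qed
qed

section \<open>Roots of unity and cyclotomic polynomials\<close>

definition unit_root :: "nat \<Rightarrow> nat \<Rightarrow> complex" where
  "unit_root n j = cis (2 * pi * real j / real n)"

lemma unit_root_eq_iff:
  assumes "n \<ge> 1"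
  shows "unit_root n j = unit_root n k \<longleftrightarrow> j mod n = k mod n"
proof -
  have "unit_root n i = exp (2 * of_real pi * \<i> * of_nat i / of_nat n)" for i
    unfolding unit_root_def cis_conv_exp by (simp add: field_simps)
  then show ?thesis using complex_root_unity_eq[OF assms] by simp
qed

lemma unit_root_power: "unit_root n j ^ m = unit_root n (j * m)"
proof -
  have "unit_root n j ^ m = cis (real m * (2 * pi * real j / real n))"
    unfolding unit_root_def by (rule Complex.DeMoivre)
  also have "\<dots> = unit_root n (j * m)" unfolding unit_root_def by (simp add: field_simps)
  finally show ?thesis .
qed

lemma unit_root_cancel: "g > 0 \<Longrightarrow> unit_root (g * n) (g * j) = unit_root n j"
  unfolding unit_root_def by (simp add: field_simps)

lemma bij_betw_unit_root:
  assumes n: "n \<ge> 1"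
  shows "bij_betw (unit_root n) {1..n} {z. z ^ n = 1}"
proof -
  have inj: "inj_on (unit_root n) {1..n}"
  proof
    fix a b assume "a \<in> {1..n}" "b \<in> {1..n}" "unit_root n a = unit_root n b"
    then show "a = b"
      using unit_root_eq_iff[OF n] by (metis atLeastAtMost_iff le_antisym le_neq_implies_less
          mod_less mod_self not_one_le_zero)
  qed
  have "unit_root n j ^ n = 1" for j
  proof -
    have "unit_root n j ^ n = unit_root n 0"
      unfolding unit_root_power using unit_root_eq_iff[OF n] by simp
    then show ?thesis by (simp add: unit_root_def)
  qed
  then have sub: "unit_root n ` {1..n} \<subseteq> {z. z ^ n = 1}" by auto
  have "card (unit_root n ` {1..n}) = card {1..n}" by (rule card_image[OF inj])
  also have "\<dots> = card {z :: complex. z ^ n = 1}" using n by (simp add: card_roots_unity_eq)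
  finally have "unit_root n ` {1..n} = {z. z ^ n = 1}"
    using sub n by (intro card_subset_eq finite_roots_unity) auto
  with inj show ?thesis by (simp add: bij_betw_def)
qed

lemma monom_minus_1_eq_prod_roots:
  assumes n: "n \<ge> 1"
  shows "monom 1 n - 1 = (\<Prod>z\<in>{z. z ^ n = 1}. [:-z, 1:] :: complex poly)"
proof -
  define p :: "complex poly" where "p = monom 1 n - 1"
  have poly_p: "poly p z = z ^ n - 1" for z by (simp add: p_def poly_monom)
  have lead: "lead_coeff p = 1" unfolding p_def by (rule lead_coeff_monom_minus_1[OF n])
  have "rsquarefree p"
    unfolding rsquarefree_roots
  proof (intro allI notI)
    fix a assume roots: "poly p a = 0 \<and> poly (pderiv p) a = 0"
    have "poly (pderiv p) a = of_nat n * a ^ (n - 1)"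
      by (simp add: p_def pderiv_diff pderiv_monom poly_monom)
    then have "a = 0" using roots n by simp
    then show False using roots n by (simp add: poly_p power_0_left)
  qed
  then have "smult (lead_coeff p) (\<Prod>z | poly p z = 0. [:-z, 1:]) = p"
    by (rule complex_poly_decompose_rsquarefree)
  moreover have "{z. poly p z = 0} = {z. z ^ n = 1}" by (simp add: poly_p)
  ultimately have "p = (\<Prod>z\<in>{z. z ^ n = 1}. [:-z, 1:])" by (simp only: lead smult_1_left)
  then show ?thesis by (simp only: p_def)
qed

lemma bij_betw_coprime_fractions:
  fixes n :: nat
  assumes n: "n \<ge> 1"
  shows "bij_betw (\<lambda>(k, i). i * (n div k))
           (SIGMA k:{k. k dvd n}. {i\<in>{1..k}. coprime i k}) {1..n}"
proof -
  define A where "A = (SIGMA k:{k. k dvd n}. {i\<in>{1..k}. coprime i k})"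
  \<comment> \<open>\<open>g\<close> writes \<open>j / n\<close> in lowest terms as \<open>i / k\<close>\<close>
  define g where "g j = (n div gcd j n, j div gcd j n)" for j
  have g_inverse: "g (i * (n div k)) = (k, i)" if "(k, i) \<in> A" for k i
  proof -
    from that have k: "k dvd n" and i: "coprime i k" by (auto simp: A_def)
    obtain l where l: "n = k * l" using k by (rule dvdE)
    have "l > 0" "k > 0" using n l by (auto intro!: gr0I)
    moreover have "gcd (i * l) (k * l) = l"
      using i by (metis coprime_imp_gcd_eq_1 gcd_mult_distrib_nat mult.commute mult.right_neutral)
    ultimately show ?thesis using l by (simp add: g_def)
  qed
  have inverse_g: "(\<lambda>(k, i). i * (n div k)) (g j) = j" if "j \<in> {1..n}" for j
  proof -
    have "n div (n div gcd j n) = gcd j n" using n by (simp add: div_div_eq_right)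
    then show ?thesis by (simp add: g_def)
  qed
  have image: "i * (n div k) \<in> {1..n}" if "(k, i) \<in> A" for k i
  proof -
    from that have k: "k dvd n" and i: "1 \<le> i" "i \<le> k" by (auto simp: A_def)
    obtain l where l: "n = k * l" using k by (rule dvdE)
    then have "l > 0" using n by (intro gr0I) auto
    with i l show ?thesis by auto
  qed
  have g_image: "g j \<in> A" if j: "j \<in> {1..n}" for j
  proof -
    obtain a where a: "j = gcd j n * a" by (rule dvdE[OF gcd_dvd1])
    obtain b where b: "n = gcd j n * b" by (rule dvdE[OF gcd_dvd2])
    have pos: "gcd j n > 0" using n by simp
    then have "j div gcd j n = a" "n div gcd j n = b"
      by (subst a, simp, subst b, simp)
    moreover have "b dvd n" using b by (metis dvd_triv_right)
    moreover have "1 \<le> a" using a j by (metis atLeastAtMost_iff mult_0_right not_one_le_zero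
          less_one not_less)
    moreover have "a \<le> b" using a b j pos by (metis atLeastAtMost_iff mult_le_cancel1 not_less0)
    moreover have "coprime (j div gcd j n) (n div gcd j n)" using n by (intro div_gcd_coprime) auto
    ultimately show ?thesis by (simp add: A_def g_def)
  qed
  show ?thesis unfolding A_def[symmetric]
  proof (rule bij_betw_byWitness[where f' = g])
    show "\<forall>x\<in>A. g ((\<lambda>(k, i). i * (n div k)) x) = x" using g_inverse by auto
    show "\<forall>j\<in>{1..n}. (\<lambda>(k, i). i * (n div k)) (g j) = j" using inverse_g by blast
    show "(\<lambda>(k, i). i * (n div k)) ` A \<subseteq> {1..n}" using image by auto
    show "g ` {1..n} \<subseteq> A" using g_image by blast
  qed
qed

lemma prod_cyclotomic_complex_divisors:
  assumes n: "n \<ge> 1"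
  shows "(\<Prod>k\<in>{k. k dvd n}. cyclotomic_complex k) = monom 1 n - 1"
proof -
  let ?A = "SIGMA k:{k. k dvd n}. {i\<in>{1..k}. coprime i k}"
  have "(\<Prod>k\<in>{k. k dvd n}. cyclotomic_complex k) = (\<Prod>(k, i)\<in>?A. [:- unit_root k i, 1:])"
    using n by (simp add: cyclotomic_complex_def unit_root_def prod.Sigma)
  also have "\<dots> = (\<Prod>(k, i)\<in>?A. [:- unit_root n (i * (n div k)), 1:])"
  proof -
    have "unit_root n (i * (n div k)) = unit_root k i" if "k dvd n" for k i
    proof -
      from that have "n = (n div k) * k" and "n div k > 0" using n by (auto intro!: gr0I)
      then show ?thesis by (metis mult.commute unit_root_cancel)
    qed
    then show ?thesis by (intro prod.cong) auto
  qed
  also have "\<dots> = (\<Prod>j\<in>{1..n}. [:- unit_root n j, 1:])"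
    using prod.reindex_bij_betw[OF bij_betw_coprime_fractions[OF n], of "\<lambda>j. [:- unit_root n j, 1:]"]
    by (simp add: case_prod_unfold)
  also have "\<dots> = (\<Prod>z\<in>{z. z ^ n = 1}. [:-z, 1:])"
    by (rule prod.reindex_bij_betw[OF bij_betw_unit_root[OF n]])
  also have "\<dots> = monom 1 n - 1" by (rule monom_minus_1_eq_prod_roots[OF n, symmetric])
  finally show ?thesis .
qed

lemma map_poly_of_int_cyclotomic:
  "n \<ge> 1 \<Longrightarrow> map_poly of_int (cyclotomic n) = cyclotomic_complex n"
proof (induction n rule: less_induct)
  case (less n)
  define D where "D = {k. k dvd n} - {n}"
  have "finite D" using less.prems by (simp add: D_def)
  have "map_poly of_int (cyclotomic k) = cyclotomic_complex k" if "k \<in> D" for k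
  proof -
    from that have "k dvd n" "k \<noteq> n" by (auto simp: D_def)
    then have "k < n" "k \<ge> 1" using less.prems by (auto simp: Suc_le_eq intro: gr0I dest: dvd_imp_le)
    then show ?thesis using less.IH by blast
  qed
  then have lower: "map_poly of_int (\<Prod>k\<in>D. cyclotomic k) = (\<Prod>k\<in>D. cyclotomic_complex k)"
    by (simp add: map_poly_of_int_prod)
  have "of_int (lead_coeff (\<Prod>k\<in>D. cyclotomic k)) = (1 :: complex)"
    unfolding lead_coeff_map_poly_of_int[symmetric] lower
    by (simp add: lead_coeff_prod cyclotomic_complex_def)
  then have monic: "lead_coeff (\<Prod>k\<in>D. cyclotomic k) = 1" by (metis of_int_eq_1_iff)
  have "{k. k dvd n} = insert n D" "n \<notin> D" by (auto simp: D_def)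
  then have "monom 1 n - 1 = cyclotomic_complex n * (\<Prod>k\<in>D. cyclotomic_complex k)"
    using prod_cyclotomic_complex_divisors[OF less.prems] \<open>finite D\<close> by simp
  then have "map_poly of_int (monom 1 n - 1) = map_poly of_int (\<Prod>k\<in>D. cyclotomic k) * cyclotomic_complex n"
    by (simp add: map_poly_of_int_diff map_poly_monom lower mult.commute)
  then obtain q where q: "cyclotomic_complex n = map_poly of_int q"
    using monic_quotient_integral[OF monic] by blast
  then have "(THE p. map_poly of_int p = cyclotomic_complex n) = q"
    by (auto simp: map_poly_of_int_inject)
  then show ?case using q by (simp add: cyclotomic_def)
qed

lemma prod_cyclotomic_divisors:
  assumes n: "n \<ge> 1"
  shows "(\<Prod>k\<in>{k. k dvd n}. cyclotomic k) = monom 1 n - 1"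
proof -
  have "map_poly of_int (\<Prod>k\<in>{k. k dvd n}. cyclotomic k) = (\<Prod>k\<in>{k. k dvd n}. cyclotomic_complex k)"
    using n by (auto simp: map_poly_of_int_prod Suc_le_eq intro!: prod.cong map_poly_of_int_cyclotomic
        intro: gr0I)
  also have "\<dots> = map_poly of_int (monom 1 n - 1)"
    by (simp add: prod_cyclotomic_complex_divisors[OF n] map_poly_of_int_diff map_poly_monom)
  finally show ?thesis by (simp only: map_poly_of_int_inject)
qed

lemma lead_coeff_cyclotomic:
  assumes "n \<ge> 1"
  shows "lead_coeff (cyclotomic n) = 1"
proof -
  have "of_int (lead_coeff (cyclotomic n)) = lead_coeff (cyclotomic_complex n)"
    using assms by (simp add: lead_coeff_map_poly_of_int[symmetric] map_poly_of_int_cyclotomic)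
  also have "\<dots> = 1" by (simp add: cyclotomic_complex_def lead_coeff_prod)
  finally show ?thesis by (metis of_int_eq_1_iff)
qed

lemma cyclotomic_dvd_monom_minus_1:
  assumes "n \<ge> 1"
  shows "cyclotomic n dvd monom 1 n - 1"
proof -
  have "cyclotomic n dvd (\<Prod>k\<in>{k. k dvd n}. cyclotomic k)"
    using assms by (intro dvd_prodI) auto
  then show ?thesis by (simp add: prod_cyclotomic_divisors[OF assms])
qed

lemma poly_cyclotomic_0: "n \<ge> 1 \<Longrightarrow> poly (cyclotomic n) 0 \<in> {1, -1}"
proof -
  assume n: "n \<ge> 1"
  then have "poly (cyclotomic n) 0 dvd poly (monom 1 n - 1) 0"
    by (intro poly_dvd_poly cyclotomic_dvd_monom_minus_1)
  then have "poly (cyclotomic n) 0 dvd 1" using n by (simp add: poly_monom power_0_left)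
  then show ?thesis by (auto simp: zdvd1_eq abs_if split: if_splits)
qed

lemma divisors_prime_mult:
  fixes p m :: nat
  assumes p: "prime p" and "\<not> p dvd m"
  shows "{k. k dvd p * m} = {k. k dvd m} \<union> (\<lambda>k. p * k) ` {k. k dvd m}"
    and "{k. k dvd m} \<inter> (\<lambda>k. p * k) ` {k. k dvd m} = {}"
proof -
  show "{k. k dvd p * m} = {k. k dvd m} \<union> (\<lambda>k. p * k) ` {k. k dvd m}"
  proof (intro equalityI subsetI)
    fix k assume k: "k \<in> {k. k dvd p * m}"
    show "k \<in> {k. k dvd m} \<union> (\<lambda>k. p * k) ` {k. k dvd m}"
    proof (cases "p dvd k")
      case True
      then obtain l where "k = p * l" by (rule dvdE)
      with k p show ?thesis by (auto simp: prime_gt_0_nat)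
    next
      case False
      then have "coprime k p" using p by (metis coprime_commute prime_imp_coprime)
      with k show ?thesis by (simp add: coprime_dvd_mult_right_iff)
    qed
  qed auto
  show "{k. k dvd m} \<inter> (\<lambda>k. p * k) ` {k. k dvd m} = {}"
    using assms(2) by (auto dest: dvd_mult_left)
qed

lemma divisor_prod_unique:
  fixes f g :: "nat \<Rightarrow> 'a :: idom"
  assumes prod_eq: "\<And>n. n \<ge> 1 \<Longrightarrow> P n \<Longrightarrow> (\<Prod>k\<in>{k. k dvd n}. f k) = (\<Prod>k\<in>{k. k dvd n}. g k)"
    and nonzero: "\<And>k. k \<ge> 1 \<Longrightarrow> P k \<Longrightarrow> g k \<noteq> 0"
    and P_dvd: "\<And>k n. k dvd n \<Longrightarrow> P n \<Longrightarrow> P k"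
  shows "n \<ge> 1 \<Longrightarrow> P n \<Longrightarrow> f n = g n"
proof (induction n rule: less_induct)
  case (less n)
  define D where "D = {k. k dvd n} - {n}"
  have D: "{k. k dvd n} = insert n D" "n \<notin> D" "finite D" using less.prems by (auto simp: D_def)
  have "k \<ge> 1" "k < n" "P k" if "k \<in> D" for k
    using that less.prems P_dvd[of k n]
    by (auto simp: D_def Suc_le_eq intro: gr0I dest: dvd_imp_le)
  then have "(\<Prod>k\<in>D. f k) = (\<Prod>k\<in>D. g k)" and "(\<Prod>k\<in>D. g k) \<noteq> 0"
    using less.IH nonzero D(3) by (auto intro: prod.cong)
  moreover have "f n * (\<Prod>k\<in>D. f k) = g n * (\<Prod>k\<in>D. g k)"
    using prod_eq[OF less.prems] D by simp
  ultimately show ?case by simp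
qed

lemma cyclotomic_prime_mult:
  assumes p: "prime p" and m: "m \<ge> 1" "\<not> p dvd m"
  shows "cyclotomic (p * m) * cyclotomic m = pcompose (cyclotomic m) (monom 1 p)"
proof (rule divisor_prod_unique[where P = "\<lambda>k. \<not> p dvd k", OF _ _ _ m])
  fix n :: nat assume n: "n \<ge> 1" "\<not> p dvd n"
  have p0: "p > 0" using p by (simp add: prime_gt_0_nat)
  have "(\<Prod>k\<in>{k. k dvd n}. cyclotomic (p * k) * cyclotomic k)
      = (\<Prod>k\<in>(\<lambda>k. p * k) ` {k. k dvd n}. cyclotomic k) * (\<Prod>k\<in>{k. k dvd n}. cyclotomic k)"
    using p0 by (simp add: prod.distrib prod.reindex inj_on_def)
  also have "\<dots> = (\<Prod>k\<in>{k. k dvd p * n}. cyclotomic k)"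
    unfolding divisors_prime_mult(1)[OF p n(2)]
    by (subst prod.union_disjoint) (use n divisors_prime_mult(2)[OF p n(2)] in \<open>auto simp: mult.commute\<close>)
  also have "\<dots> = pcompose (monom 1 n - 1) (monom 1 p)"
    using n p0 by (simp add: prod_cyclotomic_divisors pcompose_diff pcompose_monom_1 monom_power
        pcompose_1 mult.commute)
  also have "\<dots> = (\<Prod>k\<in>{k. k dvd n}. pcompose (cyclotomic k) (monom 1 p))"
    by (simp only: prod_cyclotomic_divisors[OF n(1), symmetric] pcompose_prod)
  finally show "(\<Prod>k\<in>{k. k dvd n}. cyclotomic (p * k) * cyclotomic k)
      = (\<Prod>k\<in>{k. k dvd n}. pcompose (cyclotomic k) (monom 1 p))" .
next
  fix k :: nat assume "k \<ge> 1"
  then have "lead_coeff (cyclotomic k) \<noteq> 0" by (simp add: lead_coeff_cyclotomic)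
  moreover have "degree (monom (1 :: int) p) \<noteq> 0" using p by (simp add: degree_monom_eq prime_gt_0_nat)
  ultimately show "pcompose (cyclotomic k) (monom 1 p) \<noteq> 0"
    by (auto simp: pcompose_eq_0_iff)
qed (auto dest: dvd_trans)

lemma cyclotomic_prime_mult_cong:
  assumes "prime p" "d \<le> p" "m \<ge> 1" "\<not> p dvd m"
  shows "monom 1 d dvd cyclotomic (p * m) * cyclotomic m - [:poly (cyclotomic m) 0:]"
  using monom_dvd_pcompose_monom_sub[OF assms(2)] cyclotomic_prime_mult[OF assms(1,3,4)] by simp

section \<open>Primes congruent to 1 modulo N\<close>

lemma abs_poly_cyclotomic_ge_2:
  fixes x :: int
  assumes N: "N \<ge> 1" and x: "x \<ge> 3"
  shows "\<bar>poly (cyclotomic N) x\<bar> \<ge> 2"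
proof -
  define K where "K = {k\<in>{1..N}. coprime k N}"
  have "K \<noteq> {}" using N by (auto simp: K_def intro!: exI[of _ 1])
  then have "card K \<ge> 1" by (simp add: K_def Suc_le_eq card_gt_0_iff)
  have "of_int (poly (cyclotomic N) x) = poly (cyclotomic_complex N) (of_int x)"
    using poly_map_poly_of_int[where 'a = complex, of "cyclotomic N" x] map_poly_of_int_cyclotomic[OF N]
    by simp
  then have "real_of_int \<bar>poly (cyclotomic N) x\<bar> = norm (poly (cyclotomic_complex N) (of_int x))"
    by (metis norm_of_int of_int_abs)
  also have "\<dots> = (\<Prod>k\<in>K. norm (of_int x - cis (2 * pi * real k / real N)))"
    by (simp add: cyclotomic_complex_def K_def poly_prod prod_norm)
  also have "\<dots> \<ge> (\<Prod>k\<in>K. 2)"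
  proof (rule prod_mono)
    fix k
    have "norm (complex_of_int x) - norm (cis (2 * pi * real k / real N))
        \<le> norm (of_int x - cis (2 * pi * real k / real N))" by (rule norm_triangle_ineq2)
    then show "0 \<le> (2 :: real) \<and> 2 \<le> norm (of_int x - cis (2 * pi * real k / real N))"
      using x by simp
  qed
  moreover have "(\<Prod>k\<in>K. 2 :: real) \<ge> 2"
    using \<open>card K \<ge> 1\<close> by (simp add: self_le_power)
  ultimately have "real_of_int \<bar>poly (cyclotomic N) x\<bar> \<ge> 2" by linarith
  then show ?thesis by linarith
qed

lemma prime_dvd_power_self_diff:
  assumes q: "prime q"
  shows "int q dvd int x ^ q - int x"
proof (induction x)
  case 0
  then show ?case using q by (simp add: prime_gt_0_nat power_0_left)
next
  case (Suc x)
  define g where "g k = of_nat (q choose k) * int x ^ k" for k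
  have q0: "q > 0" using q by (simp add: prime_gt_0_nat)
  have "(int x + 1) ^ q = (\<Sum>k\<le>q. g k)"
    unfolding g_def binomial_ring by simp
  also have "\<dots> = g 0 + g q + (\<Sum>k\<in>{1..<q}. g k)"
  proof -
    have "{..q} = insert 0 (insert q {1..<q})" using q0 by auto
    then show ?thesis using q0 by (simp add: add.assoc)
  qed
  finally have "int (Suc x) ^ q - int (Suc x) = (int x ^ q - int x) + (\<Sum>k\<in>{1..<q}. g k)"
    by (simp add: g_def ac_simps)
  moreover have "int q dvd (\<Sum>k\<in>{1..<q}. g k)"
  proof (rule dvd_sum)
    fix k assume "k \<in> {1..<q}"
    then have "q dvd q choose k" using q by (intro dvd_choose_prime) auto
    then show "int q dvd g k" by (simp add: g_def int_dvd_int_iff)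
  qed
  ultimately show ?case using Suc.IH by (metis dvd_add)
qed

lemma fermat_little_int:
  assumes q: "prime q" and "\<not> q dvd x"
  shows "[int x ^ (q - 1) = 1] (mod int q)"
proof -
  have "int x ^ q - int x = int x * (int x ^ (q - 1) - 1)"
    using q by (simp add: algebra_simps power_eq_if prime_gt_0_nat)
  with prime_dvd_power_self_diff[OF q, of x] have "int q dvd int x * (int x ^ (q - 1) - 1)" by simp
  moreover have "prime (int q)" "\<not> int q dvd int x" using assms by simp_all
  ultimately show ?thesis by (simp add: prime_dvd_mult_iff cong_iff_dvd_diff)
qed

lemma cong_pow_gcd_1:
  fixes x m :: int
  assumes "[x ^ a = 1] (mod m)" "[x ^ b = 1] (mod m)" "a \<noteq> 0"
  shows "[x ^ gcd a b = 1] (mod m)"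
proof -
  obtain u v where uv: "a * u = b * v + gcd a b" using bezout_nat[OF assms(3), of b] by blast
  have "[x ^ (a * u) = 1] (mod m)"
    using cong_pow[OF assms(1), of u] by (simp add: power_mult)
  moreover have "[(x ^ b) ^ v * x ^ gcd a b = 1 ^ v * x ^ gcd a b] (mod m)"
    by (intro cong_mult cong_pow assms(2) cong_refl)
  ultimately show ?thesis using uv by (metis cong_sym cong_trans power_add power_mult power_one mult_1)
qed

lemma cyclotomic_dvd_geometric_sum:
  assumes e: "e \<ge> 1" "e dvd N" "e < N"
  shows "cyclotomic N dvd (\<Sum>i<N div e. monom 1 (e * i))"
proof -
  define G where "G = (\<Sum>i<N div e. monom (1 :: int) (e * i))"
  define H where "H = (\<Prod>k\<in>{k. k dvd N} - {k. k dvd e}. cyclotomic k)"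
  have N: "N \<ge> 1" using e by simp
  have "(monom 1 e - 1) * G = monom 1 N - 1"
    using power_diff_1_eq[of "monom (1 :: int) e" "N div e"] e(2)
    by (simp add: G_def monom_power mult.commute)
  also have "monom 1 N - 1 = H * (\<Prod>k\<in>{k. k dvd e}. cyclotomic k)"
    unfolding H_def prod_cyclotomic_divisors[OF N, symmetric]
    by (rule prod.subset_diff) (use e N in \<open>auto intro: dvd_trans\<close>)
  also have "\<dots> = (monom 1 e - 1) * H" by (simp add: prod_cyclotomic_divisors[OF e(1)])
  finally have "G = H"
    using degree_monom_minus_1[OF e(1), where 'a = int] e(1) by auto
  moreover have "cyclotomic N dvd H"
    unfolding H_def using e by (intro dvd_prodI) (auto dest: dvd_imp_le)
  ultimately show ?thesis by (simp add: G_def)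
qed

lemma prime_dvd_poly_cyclotomic_imp_cong_1:
  fixes q x :: nat
  assumes q: "prime q" "q > N" and N: "N \<ge> 1" and "\<not> q dvd x"
    and dvd: "int q dvd poly (cyclotomic N) (int x)"
  shows "N dvd q - 1"
proof (rule ccontr)
  assume not_dvd: "\<not> N dvd q - 1"
  have "poly (cyclotomic N) (int x) dvd poly (monom 1 N - 1) (int x)"
    by (intro poly_dvd_poly cyclotomic_dvd_monom_minus_1 N)
  then have "[int x ^ N = 1] (mod int q)"
    using dvd by (auto simp: poly_monom cong_iff_dvd_diff intro: dvd_trans)
  define e where "e = gcd N (q - 1)"
  have "[int x ^ e = 1] (mod int q)"
    unfolding e_def using \<open>[int x ^ N = 1] (mod int q)\<close> fermat_little_int[OF q(1) \<open>\<not> q dvd x\<close>] N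
    by (intro cong_pow_gcd_1) auto
  have "e \<ge> 1" using N by (simp add: e_def Suc_le_eq)
  have "e dvd N" by (simp add: e_def)
  have "e \<noteq> N" using not_dvd unfolding e_def by (metis gcd_dvd2)
  with \<open>e dvd N\<close> have "e < N" using N by (simp add: dvd_imp_le le_neq_implies_less)
  have "poly (cyclotomic N) (int x) dvd poly (\<Sum>i<N div e. monom 1 (e * i)) (int x)"
    using \<open>e \<ge> 1\<close> \<open>e dvd N\<close> \<open>e < N\<close> by (intro poly_dvd_poly cyclotomic_dvd_geometric_sum)
  then have "[(\<Sum>i<N div e. (int x ^ e) ^ i) = 0] (mod int q)"
    using dvd by (auto simp: poly_sum poly_monom power_mult cong_0_iff intro: dvd_trans)
  moreover have "[(\<Sum>i<N div e. (int x ^ e) ^ i) = (\<Sum>i<N div e. 1)] (mod int q)"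
    using \<open>[int x ^ e = 1] (mod int q)\<close> by (intro cong_sum) (metis cong_pow power_one)
  ultimately have "[(\<Sum>i<N div e. 1) = 0] (mod int q)" by (metis cong_sym cong_trans)
  then have "[int (N div e) = 0] (mod int q)" by simp
  then have "q dvd N div e" by (simp add: cong_0_iff int_dvd_int_iff)
  moreover have "N div e > 0"
    using \<open>e \<ge> 1\<close> \<open>e dvd N\<close> N by (auto simp: div_greater_zero_iff dvd_imp_le)
  ultimately have "q \<le> N div e" by (simp add: dvd_imp_le)
  also have "\<dots> \<le> N" by simp
  finally show False using q(2) by simp
qed

lemma ex_prime_gt_cong_1:
  fixes N B :: nat
  assumes N: "N \<ge> 1"
  shows "\<exists>q. prime q \<and> q > B \<and> N dvd q - 1"
proof -
  \<comment> \<open>Every prime up to \<open>B + N + 2\<close> divides \<open>X\<close>, whereas no prime factor of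
    \<open>\<Phi>\<^sub>N(X) \<equiv> \<Phi>\<^sub>N(0) = \<plusminus>1 (mod X)\<close> does.\<close>
  define X :: nat where "X = fact (B + N + 2)"
  define v where "v = poly (cyclotomic N) (int X)"
  have "X \<ge> 3" using fact_ge_self[of "B + N + 2"] N by (simp add: X_def)
  then have "\<bar>v\<bar> \<ge> 2" unfolding v_def using abs_poly_cyclotomic_ge_2[OF N, of "int X"] by simp
  then have "nat \<bar>v\<bar> \<noteq> 1" by simp
  then obtain q where q: "prime q" "q dvd nat \<bar>v\<bar>" using prime_factor_nat by blast
  then have "int q dvd int (nat \<bar>v\<bar>)" by (simp only: int_dvd_int_iff)
  then have qv: "int q dvd v" by simp
  have "\<not> q dvd X"
  proof
    assume "q dvd X"
    then have "int q dvd int X" by (simp only: int_dvd_int_iff)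
    then have "int q dvd v - poly (cyclotomic N) 0"
      unfolding v_def using dvd_poly_sub_poly_0 by (rule dvd_trans)
    with qv have "int q dvd v - (v - poly (cyclotomic N) 0)" by (rule dvd_diff)
    then have "int q dvd 1" using poly_cyclotomic_0[OF N] by auto
    then show False using q(1) by simp
  qed
  have "q > B + N + 2"
  proof (rule ccontr)
    assume "\<not> q > B + N + 2"
    then have "q dvd X" using q(1) unfolding X_def by (intro dvd_fact) (auto simp: Suc_le_eq prime_gt_0_nat)
    with \<open>\<not> q dvd X\<close> show False ..
  qed
  moreover have "N dvd q - 1"
    using q(1) \<open>q > B + N + 2\<close> N \<open>\<not> q dvd X\<close> qv
    by (intro prime_dvd_poly_cyclotomic_imp_cong_1) (auto simp: v_def)
  ultimately show ?thesis using q(1) by (intro exI[of _ q]) auto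
qed

section \<open>Approximation by special root-of-unity polynomials\<close>

lemma ex_special_cyclotomic_inverse:
  assumes m: "m \<ge> 1"
  obtains n where "n > B" "special_form n"
    "monom 1 d dvd cyclotomic n * cyclotomic m - [:poly (cyclotomic m) 0:]"
proof -
  obtain p where p: "prime p" "p > B + d + m" "m dvd p - 1" using ex_prime_gt_cong_1[OF m] by blast
  have "\<not> p dvd m" using p(2) m by (auto dest: dvd_imp_le)
  have "p * m > B" using p(2) m by (metis add_lessD1 less_le_trans mult.right_neutral
      mult_le_mono2)
  moreover have "special_form (p * m)" using p(1,3) m by (auto simp: special_form_def)
  moreover have "monom 1 d dvd cyclotomic (p * m) * cyclotomic m - [:poly (cyclotomic m) 0:]"
    using cyclotomic_prime_mult_cong[OF p(1) _ m \<open>\<not> p dvd m\<close>] p(2) by simp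
  ultimately show ?thesis by (rule that)
qed

lemma const_unit_in_special_root_of_unity_polys:
  "c \<in> {1, -1} \<Longrightarrow> [:c:] \<in> special_root_of_unity_polys"
  unfolding special_root_of_unity_polys_def
  by (rule CollectI, rule exI[of _ "[:c:]"], rule exI[of _ "{}"]) (auto simp: one_pCons)

lemma const_unit_mult_in_special_root_of_unity_polys:
  assumes "c \<in> {1, -1}" "M \<in> special_root_of_unity_polys"
  shows "[:c:] * M \<in> special_root_of_unity_polys"
proof -
  obtain s S where M: "M = s * (\<Prod>n\<in>S. cyclotomic n)" "s \<in> {1, -1}" "finite S"
      "\<forall>n\<in>S. special_form n"
    using assms(2) by (auto simp: special_root_of_unity_polys_def)
  have "[:c:] * s \<in> {1, -1}" using assms(1) M(2) by (auto simp: one_pCons)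
  then show ?thesis using M unfolding special_root_of_unity_polys_def
    by (intro CollectI exI[of _ "[:c:] * s"] exI[of _ S]) (simp add: mult.assoc)
qed

lemma cyclotomic_mult_in_special_root_of_unity_polys:
  assumes "M \<in> special_root_of_unity_polys"
  obtains B where "\<And>n. n > B \<Longrightarrow> special_form n \<Longrightarrow> cyclotomic n * M \<in> special_root_of_unity_polys"
proof -
  obtain s S where M: "M = s * (\<Prod>n\<in>S. cyclotomic n)" "s \<in> {1, -1}" "finite S"
      "\<forall>n\<in>S. special_form n"
    using assms by (auto simp: special_root_of_unity_polys_def)
  have "cyclotomic n * M \<in> special_root_of_unity_polys" if "n > Max (insert 0 S)" "special_form n" for n
  proof -
    have "n \<notin> S" using that(1) M(3) by (auto dest: Max_ge[of "insert 0 S" n])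
    then have "cyclotomic n * M = s * (\<Prod>n\<in>insert n S. cyclotomic n)"
      using M(1,3) by (simp add: ac_simps)
    then show ?thesis using M that(2) unfolding special_root_of_unity_polys_def
      by (intro CollectI exI[of _ s] exI[of _ "insert n S"]) simp
  qed
  then show ?thesis by (rule that)
qed

definition special_approximable :: "nat \<Rightarrow> int poly \<Rightarrow> bool" where
  "special_approximable d F \<longleftrightarrow> (\<exists>M\<in>special_root_of_unity_polys. monom 1 d dvd F - M)"

lemma special_approximable_cong:
  assumes "monom 1 d dvd F - G" "special_approximable d G"
  shows "special_approximable d F"
proof -
  obtain M where "M \<in> special_root_of_unity_polys" "monom 1 d dvd G - M"
    using assms(2) by (auto simp: special_approximable_def)
  moreover have "F - M = (F - G) + (G - M)" by simp
  ultimately show ?thesis using assms(1) unfolding special_approximable_def by (metis dvd_add)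
qed

lemma special_approximable_const_unit:
  "c \<in> {1, -1} \<Longrightarrow> special_approximable d [:c:]"
  unfolding special_approximable_def
  by (rule bexI[OF _ const_unit_in_special_root_of_unity_polys]) simp_all

lemma special_approximable_const_unit_mult:
  assumes "c \<in> {1, -1}" "special_approximable d F"
  shows "special_approximable d ([:c:] * F)"
proof -
  obtain M where "M \<in> special_root_of_unity_polys" "monom 1 d dvd F - M"
    using assms(2) by (auto simp: special_approximable_def)
  moreover have "[:c:] * F - [:c:] * M = [:c:] * (F - M)" by (simp only: right_diff_distrib)
  ultimately show ?thesis using const_unit_mult_in_special_root_of_unity_polys[OF assms(1)]
    unfolding special_approximable_def by (metis dvd_mult)
qed

definition cancellable :: "nat \<Rightarrow> int poly \<Rightarrow> bool" where
  "cancellable d U \<longleftrightarrow> (\<forall>F. special_approximable d (U * F) \<longrightarrow> special_approximable d F)"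

lemma cancellable_mult:
  assumes "cancellable d U" "cancellable d V"
  shows "cancellable d (U * V)"
  using assms unfolding cancellable_def by (metis mult.assoc)

lemma cancellable_cyclotomic:
  assumes m: "m \<ge> 1"
  shows "cancellable d (cyclotomic m)"
  unfolding cancellable_def
proof (intro allI impI)
  fix F assume "special_approximable d (cyclotomic m * F)"
  then obtain M where M: "M \<in> special_root_of_unity_polys" "monom 1 d dvd cyclotomic m * F - M"
    by (auto simp: special_approximable_def)
  obtain B where B: "\<And>n. n > B \<Longrightarrow> special_form n \<Longrightarrow> cyclotomic n * M \<in> special_root_of_unity_polys"
    using cyclotomic_mult_in_special_root_of_unity_polys[OF M(1)] by blast
  define c where "c = poly (cyclotomic m) 0"
  have c: "c \<in> {1, -1}" "[:c:] * [:c:] = 1" using poly_cyclotomic_0[OF m] by (auto simp: c_def one_pCons)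
  \<comment> \<open>\<open>\<Phi>\<^sub>n\<close> inverts \<open>\<Phi>\<^sub>m\<close> up to the sign \<open>c\<close>, so \<open>F = c\<^sup>2 F \<equiv> c \<Phi>\<^sub>n \<Phi>\<^sub>m F \<equiv> c \<Phi>\<^sub>n M\<close>.\<close>
  obtain n where n: "n > B" "special_form n" "monom 1 d dvd cyclotomic n * cyclotomic m - [:c:]"
    unfolding c_def using ex_special_cyclotomic_inverse[OF m] by blast
  have "[:c:] * (cyclotomic n * M) \<in> special_root_of_unity_polys"
    using B n c(1) by (intro const_unit_mult_in_special_root_of_unity_polys) auto
  moreover have "F - [:c:] * (cyclotomic n * M) =
      [:c:] * (cyclotomic n * (cyclotomic m * F - M) - (cyclotomic n * cyclotomic m - [:c:]) * F)"
  proof -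
    have "F - [:c:] * (cyclotomic n * M) =
        [:c:] * (cyclotomic n * (cyclotomic m * F - M) - (cyclotomic n * cyclotomic m - [:c:]) * F)
        + (1 - [:c:] * [:c:]) * F"
      by (simp add: algebra_simps)
    then show ?thesis using c(2) by simp
  qed
  then have "monom 1 d dvd F - [:c:] * (cyclotomic n * M)"
    using M(2) n(3) by (simp only: dvd_mult[OF dvd_diff[OF dvd_mult dvd_mult2]])
  ultimately show "special_approximable d F" unfolding special_approximable_def by blast
qed

lemma special_approximable_mult_cyclotomic:
  assumes m: "m \<ge> 1" and approx: "special_approximable d F"
  shows "special_approximable d (cyclotomic m * F)"
proof -
  obtain q where q: "prime q" "q > d + m" using bigger_prime by blast
  have "\<not> q dvd m" using q(2) m by (auto dest: dvd_imp_le)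
  have "q * m \<ge> 1" using q(1) m by (simp add: Suc_le_eq prime_gt_0_nat)
  define c where "c = poly (cyclotomic m) 0"
  have "monom 1 d dvd cyclotomic (q * m) * cyclotomic m - [:c:]"
    unfolding c_def using cyclotomic_prime_mult_cong[OF q(1) _ m \<open>\<not> q dvd m\<close>] q(2) by simp
  moreover have "cyclotomic (q * m) * (cyclotomic m * F) - [:c:] * F =
      (cyclotomic (q * m) * cyclotomic m - [:c:]) * F" by (simp only: left_diff_distrib mult.assoc)
  ultimately have "monom 1 d dvd cyclotomic (q * m) * (cyclotomic m * F) - [:c:] * F"
    by (simp only: dvd_mult2)
  moreover have "special_approximable d ([:c:] * F)"
    using poly_cyclotomic_0[OF m] approx unfolding c_def by (rule special_approximable_const_unit_mult)
  ultimately have "special_approximable d (cyclotomic (q * m) * (cyclotomic m * F))"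
    by (rule special_approximable_cong)
  then show ?thesis using cancellable_cyclotomic[OF \<open>q * m \<ge> 1\<close>] unfolding cancellable_def by blast
qed

lemma special_approximable_mult_prod_cyclotomic_iff:
  assumes "finite K" "\<forall>k\<in>K. k \<ge> 1"
  shows "special_approximable d ((\<Prod>k\<in>K. cyclotomic k) * F) \<longleftrightarrow> special_approximable d F"
  using assms
proof (induction K rule: finite_induct)
  case (insert k K)
  then have "k \<ge> 1" by simp
  then have "special_approximable d (cyclotomic k * ((\<Prod>k\<in>K. cyclotomic k) * F)) \<longleftrightarrow>
      special_approximable d ((\<Prod>k\<in>K. cyclotomic k) * F)"
    using special_approximable_mult_cyclotomic cancellable_cyclotomic unfolding cancellable_def by blast
  then show ?case using insert by (simp add: mult.assoc)
qed simp

lemma special_approximable_mult_monom_minus_1_iff: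
  assumes "n \<ge> 1"
  shows "special_approximable d ((monom 1 n - 1) * F) \<longleftrightarrow> special_approximable d F"
proof -
  have "\<forall>k\<in>{k. k dvd n}. k \<ge> 1" using assms by (auto simp: Suc_le_eq intro!: gr0I)
  then show ?thesis using special_approximable_mult_prod_cyclotomic_iff[of "{k. k dvd n}" d F] assms
    by (simp add: prod_cyclotomic_divisors)
qed

lemma cancellable_1_minus_monom:
  assumes "n \<ge> 1"
  shows "cancellable d (1 - monom 1 n)"
  unfolding cancellable_def
proof (intro allI impI)
  fix F assume "special_approximable d ((1 - monom 1 n) * F)"
  then have "special_approximable d ([:-1:] * ((1 - monom 1 n) * F))"
    by (intro special_approximable_const_unit_mult) auto
  also have "[:-1:] * ((1 - monom 1 n) * F) = (monom 1 n - 1) * F" by (simp add: algebra_simps)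
  finally show "special_approximable d F"
    using special_approximable_mult_monom_minus_1_iff[OF assms] by simp
qed

lemma cancellable_1_plus_monom:
  assumes "n \<ge> 1"
  shows "cancellable d (1 + monom 1 n)"
  unfolding cancellable_def
proof (intro allI impI)
  fix F assume "special_approximable d ((1 + monom 1 n) * F)"
  then have "special_approximable d ((monom 1 n - 1) * ((1 + monom 1 n) * F))"
    using special_approximable_mult_monom_minus_1_iff[OF assms] by blast
  also have "(monom 1 n - 1) * ((1 + monom 1 n) * F) = (monom 1 (n + n) - 1) * F"
    by (simp add: algebra_simps mult_monom)
  finally show "special_approximable d F"
    using special_approximable_mult_monom_minus_1_iff[of "n + n" d F] assms by simp
qed

lemma inverse_1_plus_monom_step:
  assumes n: "n \<ge> 1" and U: "monom 1 (Suc n) dvd U * (1 + monom r n) - 1"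
  shows "monom 1 (Suc n) dvd U * (1 - monom s n) * (1 + monom (r + s) n) - (1 :: int poly)"
proof -
  let ?X = "monom (1 :: int) n"
  have monom_eq: "monom a n = [:a:] * ?X" for a by (simp add: smult_monom)
  have const_add: "[:r + s:] = [:r:] + [:s:]" by simp
  have "U * (1 - S * X) * (1 + (C + S) * X) - 1 = (U * (1 + C * X) - 1) - X * X * (U * S * (C + S))"
    for U X C S :: "int poly" by (simp add: algebra_simps)
  from this[of U "[:s:]" ?X "[:r:]"]
  have eq: "U * (1 - monom s n) * (1 + monom (r + s) n) - 1
      = (U * (1 + monom r n) - 1) - ?X * ?X * (U * [:s:] * ([:r:] + [:s:]))"
    by (simp only: monom_eq[of r] monom_eq[of s] monom_eq[of "r + s"] const_add)
  have square: "?X * ?X = monom 1 (Suc n) * monom 1 (n - 1)" using n by (simp add: mult_monom)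
  have "monom 1 (Suc n) dvd ?X * ?X * (U * [:s:] * ([:r:] + [:s:]))"
    by (simp only: square mult.assoc dvd_triv_left)
  with U show ?thesis unfolding eq by (rule dvd_diff)
qed

lemma ex_cancellable_inverse_1_plus_monom:
  assumes n: "n \<ge> 1"
  shows "\<exists>U. cancellable d U \<and> monom 1 (Suc n) dvd U * (1 + monom r n) - 1"
proof (induction r rule: int_induct[where k = 0])
  case base
  show ?case by (intro exI[of _ 1]) (simp add: cancellable_def)
next
  case (step1 r)
  then obtain U where "cancellable d U" "monom 1 (Suc n) dvd U * (1 + monom r n) - 1" by blast
  then have "cancellable d (U * (1 - monom 1 n))"
    and "monom 1 (Suc n) dvd U * (1 - monom 1 n) * (1 + monom (r + 1) n) - 1"
    using cancellable_mult cancellable_1_minus_monom[OF n] inverse_1_plus_monom_step[OF n] by blast+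
  then show ?case by blast
next
  case (step2 r)
  then obtain U where "cancellable d U" "monom 1 (Suc n) dvd U * (1 + monom r n) - 1" by blast
  then have "cancellable d (U * (1 + monom 1 n))"
    and "monom 1 (Suc n) dvd U * (1 - monom (- 1) n) * (1 + monom (r + - 1) n) - 1"
    using cancellable_mult cancellable_1_plus_monom[OF n] inverse_1_plus_monom_step[OF n] by blast+
  then show ?case by (intro exI[of _ "U * (1 + monom 1 n)"]) (simp add: minus_monom[symmetric])
qed

lemma special_approximable_of_cong_const_unit:
  assumes "1 \<le> n" "n \<le> d"
  shows "c \<in> {1, -1} \<Longrightarrow> monom 1 n dvd F - [:c:] \<Longrightarrow> special_approximable d F"
  using assms(2)
proof (induction n arbitrary: F c rule: inc_induct)
  case base
  then show ?case using special_approximable_cong special_approximable_const_unit by blast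
next
  case (step k)
  have "k \<ge> 1" using assms(1) step.hyps(1) by simp
  obtain Q where Q: "F - [:c:] = monom 1 k * Q" using step.prems(2) by (rule dvdE)
  \<comment> \<open>\<open>F \<equiv> c (1 + r T\<^sup>k) (mod T\<^bsup>k+1\<^esup>)\<close>, and \<open>U\<close> inverts \<open>1 + r T\<^sup>k\<close> to that precision.\<close>
  define r where "r = c * poly Q 0"
  obtain U where U: "cancellable d U" "monom 1 (Suc k) dvd U * (1 + monom r k) - 1"
    using ex_cancellable_inverse_1_plus_monom[OF \<open>k \<ge> 1\<close>] by blast
  have "c * c = 1" using step.prems(1) by auto
  then have eq: "F - [:c:] * (1 + monom r k) = monom 1 k * (Q - [:poly Q 0:])"
    using Q by (simp add: r_def algebra_simps smult_monom flip: mult.assoc)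
  have dvd: "monom 1 (Suc k) dvd monom 1 k * (Q - [:poly Q 0:])"
  proof -
    have "monom 1 (Suc k) = monom 1 k * monom (1 :: int) (Suc 0)" by (simp add: mult_monom)
    then show ?thesis by (simp only: mult_dvd_mono[OF dvd_refl monom_1_dvd_sub_poly_0])
  qed
  have "monom 1 (Suc k) dvd U * (F - [:c:] * (1 + monom r k)) + [:c:] * (U * (1 + monom r k) - 1)"
    unfolding eq by (rule dvd_add[OF dvd_mult[OF dvd] dvd_mult[OF U(2)]])
  also have "U * (F - [:c:] * (1 + monom r k)) + [:c:] * (U * (1 + monom r k) - 1) = U * F - [:c:]"
    by (simp add: algebra_simps)
  finally have "special_approximable d (U * F)" using step.IH step.prems(1) by blast
  then show ?case using U(1) unfolding cancellable_def by blast
qed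

theorem proposition7p3:
  fixes F :: "int poly" and d :: nat
  assumes "poly F 0 \<in> {-1, 1}" and "d > 0"
  shows "\<exists>M\<in>special_root_of_unity_polys. monom 1 d dvd (F - M)"
proof -
  have "poly F 0 \<in> {1, -1}" "1 \<le> d" using assms by auto
  with monom_1_dvd_sub_poly_0[of F] have "special_approximable d F"
    by (intro special_approximable_of_cong_const_unit[of 1 d]) simp_all
  then show ?thesis by (simp add: special_approximable_def)
qed

end
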